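(* For each constant $\beta\in[0,1)$, there exists an indivisible-goods instance in which no allocation satisfies EJR-$\beta$. This remains true even if the inequality $u_j(A)>t-\beta$ in the definition of EJR-$\beta$ is relaxed to $u_j(A)\ge t-\beta$.
   Context: Model: There is a set of agents $N=\{1,\dots,n\}$. The resource $R$ consists of a cake $C=[0,c]$ for a real $c\ge 0$ and a set of indivisible goods $G=\{g_1,\dots,g_m\}$ for an integer $m\ge 0$, with $\max(c,m)>0$. A piece of cake is a union of finitely many disjoint closed subintervals of $C$; its length $\ell(\cdot)$ is the sum of the lengths of its intervals. A bundle $R'=(C',G')$ consists of a piece of cake $C'\subseteq C$ and a set $G'\subseteq G$; its size is $s(R')=\ell(C')+|G'|$. Each agent $i$ approves a bundle $R_i=(C_i,G_i)$, and her utility for a bundle $R'$ is $u_i(R')=s(R_i\cap R')=\ell(C_i\cap C')+|G_i\cap G'|$. A parameter $\alpha\in(0,c+m]$ is given; an allocation is a bundle $A$ with $s(A)\le\alpha$. An instance consists of $R$, $N$, $(R_i)_{i\in N}$ and $\alpha$. It is an indivisible-goods instance if $c=0$ and a cake instance if $m=0$. For a real $t>0$, a group $N^*\subseteq N$ is $t$-cohesive if $|N^*|\ge t\cdot n/\alpha$ and $s(\bigcap_{i\in N^*}R_i)\ge t$. EJR-$\beta$ (for $\beta\ge 0$): an allocation $A$ satisfies EJR-$\beta$ if for every real $t>0$ and every $t$-cohesive group $N^*$, there is $j\in N^*$ with $u_j(A)>t-\beta$. *)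

theory Defs
  imports "HOL-Analysis.Analysis"
begin

text \<open>Cake C = [0,c] (real c \<ge> 0); goods G = {g_1..g_m} are modelled as the naturals
  0..m-1; agents N = {1..n} are modelled as 0..n-1.
  A bundle is a pair (piece of cake, set of goods).\<close>

type_synonym bndl = "real set \<times> nat set"

definition cake :: "real \<Rightarrow> real set" where
  "cake c = {0..c}"

definition goods :: "nat \<Rightarrow> nat set" where
  "goods m = {..<m}"

definition is_piece :: "real \<Rightarrow> real set \<Rightarrow> bool" where
  "is_piece c P \<longleftrightarrow> (\<exists>F :: (real \<times> real) set. finite F \<and>
      (\<forall>(a,b)\<in>F. 0 \<le> a \<and> a \<le> b \<and> b \<le> c) \<and>
      (\<forall>(a,b)\<in>F. \<forall>(a',b')\<in>F. (a,b) \<noteq> (a',b') \<longrightarrow> {a..b} \<inter> {a'..b'} = {}) \<and>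
      P = (\<Union>(a,b)\<in>F. {a..b}))"

definition is_bundle :: "real \<Rightarrow> nat \<Rightarrow> bndl \<Rightarrow> bool" where
  "is_bundle c m B \<longleftrightarrow> is_piece c (fst B) \<and> snd B \<subseteq> goods m"

definition len :: "real set \<Rightarrow> real" where
  "len P = measure lborel P"

definition bsize :: "bndl \<Rightarrow> real" where
  "bsize B = len (fst B) + real (card (snd B))"

definition binter :: "bndl \<Rightarrow> bndl \<Rightarrow> bndl" where
  "binter B B' = (fst B \<inter> fst B', snd B \<inter> snd B')"

definition util :: "(nat \<Rightarrow> bndl) \<Rightarrow> nat \<Rightarrow> bndl \<Rightarrow> real" where
  "util R i A = bsize (binter (R i) A)"

definition valid_instance ::
  "real \<Rightarrow> nat \<Rightarrow> nat \<Rightarrow> (nat \<Rightarrow> bndl) \<Rightarrow> real \<Rightarrow> bool" where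
  "valid_instance c m n R \<alpha> \<longleftrightarrow>
     0 \<le> c \<and> max c (real m) > 0 \<and> n \<ge> 1 \<and>
     (\<forall>i<n. is_bundle c m (R i)) \<and>
     0 < \<alpha> \<and> \<alpha> \<le> c + real m"

definition is_allocation :: "real \<Rightarrow> nat \<Rightarrow> real \<Rightarrow> bndl \<Rightarrow> bool" where
  "is_allocation c m \<alpha> A \<longleftrightarrow> is_bundle c m A \<and> bsize A \<le> \<alpha>"

definition group_inter :: "real \<Rightarrow> nat \<Rightarrow> (nat \<Rightarrow> bndl) \<Rightarrow> nat set \<Rightarrow> bndl" where
  "group_inter c m R S = (cake c \<inter> (\<Inter>i\<in>S. fst (R i)), goods m \<inter> (\<Inter>i\<in>S. snd (R i)))"

definition cohesive ::
  "real \<Rightarrow> nat \<Rightarrow> nat \<Rightarrow> (nat \<Rightarrow> bndl) \<Rightarrow> real \<Rightarrow> real \<Rightarrow> nat set \<Rightarrow> bool" where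
  "cohesive c m n R \<alpha> t S \<longleftrightarrow>
     S \<subseteq> {..<n} \<and> real (card S) \<ge> t * real n / \<alpha> \<and> bsize (group_inter c m R S) \<ge> t"

definition EJR ::
  "real \<Rightarrow> nat \<Rightarrow> nat \<Rightarrow> (nat \<Rightarrow> bndl) \<Rightarrow> real \<Rightarrow> real \<Rightarrow> bndl \<Rightarrow> bool" where
  "EJR c m n R \<alpha> \<beta> A \<longleftrightarrow>
     (\<forall>t>0. \<forall>S. cohesive c m n R \<alpha> t S \<longrightarrow> (\<exists>j\<in>S. util R j A > t - \<beta>))"

definition weak_EJR ::
  "real \<Rightarrow> nat \<Rightarrow> nat \<Rightarrow> (nat \<Rightarrow> bndl) \<Rightarrow> real \<Rightarrow> real \<Rightarrow> bndl \<Rightarrow> bool" where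
  "weak_EJR c m n R \<alpha> \<beta> A \<longleftrightarrow>
     (\<forall>t>0. \<forall>S. cohesive c m n R \<alpha> t S \<longrightarrow> (\<exists>j\<in>S. util R j A \<ge> t - \<beta>))"

end

theory Submission
  imports Defs
begin

text \<open>With m goods, agent i approving only good i, and \<alpha> < m, every allocation misses some
  good j. The singleton group {j} is (\<alpha>/m)-cohesive, yet agent j gets utility 0, which is
  below \<alpha>/m - \<beta> whenever \<beta> < \<alpha>/m. For m = 2 and \<alpha> = 1 + \<beta> this holds for every \<beta> < 1.\<close>

definition own_good_profile :: "nat \<Rightarrow> bndl" where
  "own_good_profile i = ({}, {i})"

lemma EJR_imp_weak_EJR:
  assumes "EJR c m n R \<alpha> \<beta> A"
  shows "weak_EJR c m n R \<alpha> \<beta> A"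
  using assms unfolding EJR_def weak_EJR_def by (meson less_imp_le)

lemma is_piece_empty: "is_piece c {}"
  unfolding is_piece_def by (rule exI[of _ "{}"]) simp

lemma valid_instance_own_good_profile:
  assumes "0 < \<alpha>" "\<alpha> \<le> real m"
  shows "valid_instance 0 m m own_good_profile \<alpha>"
proof -
  have "m \<ge> 1" using assms by linarith
  then show ?thesis
    using assms is_piece_empty
    by (auto simp: valid_instance_def is_bundle_def goods_def own_good_profile_def)
qed

lemma allocation_misses_good:
  assumes "is_allocation c m \<alpha> A" "\<alpha> < real m"
  obtains j where "j < m" "j \<notin> snd A"
proof -
  have "snd A \<subseteq> {..<m}"
    using assms(1) by (simp add: is_allocation_def is_bundle_def goods_def)
  moreover have "real (card (snd A)) \<le> bsize A"
    by (simp add: bsize_def len_def)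
  with assms have "card (snd A) < card {..<m}"
    unfolding is_allocation_def by simp
  ultimately have "snd A \<subset> {..<m}"
    by auto
  then show thesis using that by blast
qed

lemma cohesive_own_good_singleton:
  assumes "j < m" "0 < \<alpha>" "\<alpha> \<le> real m"
  shows "cohesive 0 m m own_good_profile \<alpha> (\<alpha> / real m) {j}"
proof -
  have "group_inter 0 m own_good_profile {j} = ({}, {j})"
    using assms(1) by (auto simp: group_inter_def own_good_profile_def goods_def)
  moreover have "m > 0" using assms(1) by simp
  ultimately show ?thesis
    using assms by (simp add: cohesive_def bsize_def len_def)
qed

lemma util_own_good_profile_missing:
  assumes "j \<notin> snd A"
  shows "util own_good_profile j A = 0"
  using assms by (simp add: util_def bsize_def binter_def len_def own_good_profile_def)

lemma own_good_profile_not_weak_EJR: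
  assumes "0 < \<alpha>" "\<alpha> < real m" "\<beta> < \<alpha> / real m"
    and "is_allocation 0 m \<alpha> A"
  shows "\<not> weak_EJR 0 m m own_good_profile \<alpha> \<beta> A"
proof
  assume ejr: "weak_EJR 0 m m own_good_profile \<alpha> \<beta> A"
  obtain j where j: "j < m" "j \<notin> snd A"
    using allocation_misses_good assms(2,4) by blast
  have "cohesive 0 m m own_good_profile \<alpha> (\<alpha> / real m) {j}"
    using cohesive_own_good_singleton j(1) assms(1,2) by simp
  moreover have "\<alpha> / real m > 0" using assms(1,2) by simp
  ultimately have "util own_good_profile j A \<ge> \<alpha> / real m - \<beta>"
    using ejr unfolding weak_EJR_def by blast
  with util_own_good_profile_missing[OF j(2)] assms(3) show False by simp
qed

theorem mainTheorem1:
  fixes \<beta> :: real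
  assumes "0 \<le> \<beta>" and "\<beta> < 1"
  shows "\<exists>c m n R \<alpha>. valid_instance c m n R \<alpha> \<and> c = 0 \<and>
           (\<forall>A. is_allocation c m \<alpha> A \<longrightarrow> \<not> EJR c m n R \<alpha> \<beta> A) \<and>
           (\<forall>A. is_allocation c m \<alpha> A \<longrightarrow> \<not> weak_EJR c m n R \<alpha> \<beta> A)"
proof -
  have \<alpha>: "0 < 1 + \<beta>" "1 + \<beta> < real 2" "\<beta> < (1 + \<beta>) / real 2"
    using assms by simp_all
  have no_weak_EJR: "\<not> weak_EJR 0 2 2 own_good_profile (1 + \<beta>) \<beta> A"
    if "is_allocation 0 2 (1 + \<beta>) A" for A
    using own_good_profile_not_weak_EJR[OF \<alpha> that] .
  have "valid_instance 0 2 2 own_good_profile (1 + \<beta>)"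
    using valid_instance_own_good_profile \<alpha> by simp
  with no_weak_EJR EJR_imp_weak_EJR show ?thesis by blast
qed

end
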